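(* Let $y\in\mathbb{R}^q$ be a random vector with density $f_0^*(y'y)$, where $f_0^*$ is nonincreasing, and let $x\in\mathbb{R}^p$ be a random vector independent of $y$; let $H_0$ be the distribution of $(y',x')'$. For $(B,\Sigma)\in\mathbb{R}^{p\times q}\times\mathcal{S}_q$ and $\kappa>0$ let $$\alpha(B,\Sigma;\kappa)=E_{H_0}I\big((y-B'x)'\Sigma^{-1}(y-B'x)\le\kappa\big).$$ Then there exists a constant $\kappa_1$, independent of $B$ and $\Sigma$, such that $\alpha(B,\Sigma;\kappa)\le\kappa_1\lambda_j(\Sigma)^{1/2}$ for all $j$, $1\le j\le q$.
   Context: $\mathcal{S}_q$ is the set of positive definite symmetric $q\times q$ matrices; $\lambda_1(\Sigma)\ge\dots\ge\lambda_q(\Sigma)$ are the eigenvalues of $\Sigma$; $I(\cdot)$ is the indicator function. *)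

theory Defs
  imports "HOL-Probability.Probability" "HOL-Computational_Algebra.Polynomial"
begin

definition pos_def_sym :: "real^'q^'q \<Rightarrow> bool" where
  "pos_def_sym S \<longleftrightarrow> transpose S = S \<and> (\<forall>v. v \<noteq> 0 \<longrightarrow> v \<bullet> (S *v v) > 0)"

definition charpoly :: "real^'q^'q \<Rightarrow> real poly" where
  "charpoly A = det (\<chi> i j. (if i = j then [:0, 1:] else 0) - [: A $ i $ j :])"

text \<open>Eigenvalues with multiplicity in nonincreasing order; eig_val A j is
  lambda_j(A) for 1 <= j <= q (1-based indexing).\<close>
definition eig_vals :: "real^'q^'q \<Rightarrow> real list" where
  "eig_vals A = rev (sorted_list_of_multiset (proots (charpoly A)))"

definition eig_val :: "real^'q^'q \<Rightarrow> nat \<Rightarrow> real" where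
  "eig_val A j = eig_vals A ! (j - 1)"

definition alpha :: "'w measure \<Rightarrow> ('w \<Rightarrow> real^'q) \<Rightarrow> ('w \<Rightarrow> real^'p)
    \<Rightarrow> real^'q^'p \<Rightarrow> real^'q^'q \<Rightarrow> real \<Rightarrow> real" where
  "alpha M Y X B S \<kappa> =
     (\<integral>\<omega>. indicator {\<omega>\<in>space M. (Y \<omega> - transpose B *v X \<omega>) \<bullet> (matrix_inv S *v (Y \<omega> - transpose B *v X \<omega>)) \<le> \<kappa>} \<omega> \<partial>M)"

end

theory Submission
  imports Defs "HOL-Computational_Algebra.Fundamental_Theorem_Algebra"
begin

text \<open>Let \<open>e\<close> be a unit eigenvector of \<open>\<Sigma>\<close> for \<open>\<lambda> = \<lambda>\<^sub>j(\<Sigma>)\<close>. The ellipsoid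
  \<open>z' \<Sigma>\<^sup>-\<^sup>1 z \<le> \<kappa>\<close> lies in the slab \<open>\<bar>e \<bullet> z\<bar> \<le> sqrt (\<kappa> \<lambda>)\<close>, so \<open>\<alpha>\<close> is at most
  the probability that \<open>\<bar>e \<bullet> y - e \<bullet> B'x\<bar> \<le> sqrt (\<kappa> \<lambda>)\<close>, and by independence it suffices to
  show that the density \<open>f0 (v \<bullet> v)\<close> gives mass at most \<open>C r\<close> to every slab \<open>\<bar>e \<bullet> v - c\<bar> \<le> r\<close>.
  The affine map that halves the component orthogonal to \<open>e\<close> and sends this slab onto
  \<open>\<bar>e \<bullet> w\<bar> \<le> 1\<close> has Jacobian \<open>1 / (r 2^(q-1))\<close>, and it moves no point of the slab away from the
  origin except into the ball of radius 2. Since \<open>f0\<close> is nonincreasing, on the slab the density is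
  dominated by \<open>f0 (w \<bullet> w) + f0 0 \<cdot> [\<parallel>w\<parallel> \<le> 2]\<close> at the image point \<open>w\<close>, and a change of variables gives
  \<open>C = 2^(q-1) (1 + f0 0 \<cdot> vol (cball 0 2))\<close>. That \<open>\<lambda>\<^sub>j(\<Sigma>)\<close> is an eigenvalue at all rests on the
  characteristic polynomial of a real symmetric matrix having only real roots.\<close>

section \<open>Linear changes of variables in \<open>real^'n\<close>\<close>

lemma det_matrix_shear:
  fixes m n :: "'n::finite"
  assumes "m \<noteq> n"
  shows "det (matrix (\<lambda>v::real^'n. \<chi> i. if i = m then v $ m + v $ n else v $ i)) = 1"
proof -
  have "matrix (\<lambda>v::real^'n. \<chi> i. if i = m then v $ m + v $ n else v $ i)
     = (\<chi> k. if k = m then row m (mat 1) + 1 *s row n (mat 1) else row k (mat 1))"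
    by (auto simp: matrix_def vec_eq_iff row_def mat_def axis_def)
  then show ?thesis
    using det_row_operation[OF assms, of "mat 1 :: real^'n^'n" 1] by simp
qed

lemma abs_det_matrix_transposition:
  fixes m n :: "'n::finite"
  shows "\<bar>det (matrix (\<lambda>v::real^'n. \<chi> i. v $ Transposition.transpose m n i))\<bar> = 1"
proof -
  have "(\<chi> i j. if Transposition.transpose m n i = j then 1 else 0)
      = (\<chi> i j. if j = Transposition.transpose m n i then 1 else (0::real))"
    by (auto intro!: Cart_lambda_cong)
  then have "matrix (\<lambda>v::real^'n. \<chi> i. v $ Transposition.transpose m n i)
      = transpose (\<chi> i j. mat 1 $ i $ Transposition.transpose m n j)"
    by (auto simp: matrix_eq transpose_def axis_def mat_def matrix_def)
  then show ?thesis
    by (simp add: det_permute_columns permutes_swap_id sign_swap_id abs_mult)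
qed

lemma measure_transposition_image_cbox:
  fixes m n :: "'n::finite"
  shows "measure lebesgue ((\<lambda>v::real^'n. \<chi> i. v $ Transposition.transpose m n i) ` cbox a b)
       = measure lebesgue (cbox a b)"
proof (cases "cbox a b = {}")
  case False
  let ?h = "\<lambda>v::real^'n. \<chi> i. v $ Transposition.transpose m n i"
  have eq: "?h ` cbox a b = cbox (?h a) (?h b)"
    by (auto simp: image_iff lambda_swap_Galois mem_box_cart) (metis transpose_involutory)+
  have "?h ` cbox a b \<noteq> {}"
    using False by blast
  then show ?thesis
    using prod.permute [OF permutes_swap_id, where S=UNIV and g="\<lambda>i. (b - a)$i", symmetric]
    by (simp add: eq content_cbox_cart False)
qed simp

lemma measure_shear_image_cbox:
  fixes m n :: "'n::finite"
  assumes "m \<noteq> n"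
  shows "measure lebesgue ((\<lambda>v::real^'n. \<chi> i. if i = m then v $ m + v $ n else v $ i) ` cbox a b)
       = measure lebesgue (cbox a b)"
proof (cases "cbox a b = {}")
  case False
  let ?h = "\<lambda>v::real^'n. \<chi> i. if i = m then v $ m + v $ n else v $ i"
  define v :: "real^'n" where "v = (\<chi> i. if i = n then - a $ n else 0)"
  \<comment> \<open>The library computes shears only of boxes with nonnegative \<open>n\<close>-th lower corner, so translate first.\<close>
  have "?h ` cbox a b = (+) (\<chi> i. if i = m \<or> i = n then a $ n else 0) ` ?h ` (+) v ` cbox a b"
    using assms unfolding image_comp o_def v_def by (force simp: vec_eq_iff)
  then have "measure lebesgue (?h ` cbox a b) = measure lebesgue (?h ` cbox (v + a) (v + b))"
    by (simp add: measure_translation cbox_translation)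
  also have "\<dots> = measure lebesgue (cbox (v + a) (v + b))"
  proof (rule measure_shear_interval)
    show "cbox (v + a) (v + b) \<noteq> {}"
      using False by (metis cbox_translation image_is_empty)
  qed (use assms in \<open>simp_all add: v_def\<close>)
  also have "\<dots> = measure lebesgue (cbox a b)"
    by (metis cbox_translation measure_translation)
  finally show ?thesis .
qed simp

text \<open>The library's \<open>measure_linear_image\<close> asks for a wellordered index type, which it needs
  only to compute the determinant of a shear; \<open>det_matrix_shear\<close> removes that restriction.\<close>

proposition
  fixes f :: "real^'n::finite \<Rightarrow> real^'n"
  assumes "linear f" "S \<in> lmeasurable"
  shows lmeasurable_linear_image_finite: "f ` S \<in> lmeasurable"
    and measure_linear_image_finite: "measure lebesgue (f ` S) = \<bar>det (matrix f)\<bar> * measure lebesgue S"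
proof -
  let ?Q = "\<lambda>f S. f ` S \<in> lmeasurable
                  \<and> measure lebesgue (f ` S) = \<bar>det (matrix f)\<bar> * measure lebesgue S"
  have "\<forall>S \<in> lmeasurable. ?Q f S"
  proof (rule induct_linear_elementary [OF \<open>linear f\<close>]; intro ballI)
    fix f g :: "real^'n \<Rightarrow> real^'n" and S :: "(real^'n) set"
    assume "linear f" "linear g" and f: "\<forall>S \<in> lmeasurable. ?Q f S" and g: "\<forall>S \<in> lmeasurable. ?Q g S"
      and "S \<in> lmeasurable"
    then have "?Q g S"
      by blast
    then show "?Q (f \<circ> g) S"
      using f matrix_compose [OF \<open>linear g\<close> \<open>linear f\<close>]
      by (simp only: image_comp [symmetric]) (simp add: det_mul abs_mult)
  next
    fix f :: "real^'n \<Rightarrow> real^'n" and i and S :: "(real^'n) set"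
    assume "linear f" and "\<And>x. f x $ i = 0"
    then have "\<not> inj f"
      by (metis (full_types) linear_injective_imp_surjective one_neq_zero surjE vec_component)
    then have "det (matrix f) = 0" "negligible (f ` S)"
      using det_nz_iff_inj [OF \<open>linear f\<close>] negligible_linear_singular_image [OF \<open>linear f\<close>]
      by auto
    then show "?Q f S"
      by (simp add: negligible_imp_measure0 negligible_imp_measurable)
  next
    fix c :: "'n \<Rightarrow> real" and S :: "(real^'n) set"
    assume "S \<in> lmeasurable"
    then show "?Q (\<lambda>x. \<chi> i. c i * x $ i) S"
      by (simp add: measurable_stretch measure_stretch axis_def matrix_def det_diagonal)
  next
    fix m n :: 'n and S :: "(real^'n) set"
    assume "m \<noteq> n" and "S \<in> lmeasurable"
    let ?h = "\<lambda>v::real^'n. \<chi> i. v $ Transposition.transpose m n i"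
    have lin: "linear ?h"
      by (rule linearI) (simp_all add: plus_vec_def scaleR_vec_def)
    show "?Q ?h S"
      using measure_linear_sufficient [OF lin \<open>S \<in> lmeasurable\<close>, of 1]
        measure_transposition_image_cbox [of m n] abs_det_matrix_transposition [of m n]
      by simp
  next
    fix m n :: 'n and S :: "(real^'n) set"
    assume "m \<noteq> n" and "S \<in> lmeasurable"
    let ?h = "\<lambda>v::real^'n. \<chi> i. if i = m then v $ m + v $ n else v $ i"
    have lin: "linear ?h"
      by (rule linearI) (auto simp: algebra_simps plus_vec_def scaleR_vec_def vec_eq_iff)
    show "?Q ?h S"
      using measure_linear_sufficient [OF lin \<open>S \<in> lmeasurable\<close>]
        measure_shear_image_cbox [OF \<open>m \<noteq> n\<close>] det_matrix_shear [OF \<open>m \<noteq> n\<close>]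
      by force
  qed
  with assms show "f ` S \<in> lmeasurable" "measure lebesgue (f ` S) = \<bar>det (matrix f)\<bar> * measure lebesgue S"
    by auto
qed

lemma lborel_linear_finite:
  fixes f :: "real^'n::finite \<Rightarrow> real^'n"
  assumes f: "linear f" and "det (matrix f) \<noteq> 0"
  shows "lborel = density (distr lborel borel f) (\<lambda>_. ennreal \<bar>det (matrix f)\<bar>)"
proof (rule lborel_eqI)
  have "inj f"
    using assms det_nz_iff_inj by blast
  then obtain g where g: "linear g" and gf: "\<And>x. g (f x) = x" and fg: "\<And>x. f (g x) = x"
    using f linear_injective_isomorphism by metis
  have f_borel [measurable]: "f \<in> borel_measurable borel"
    using f by (intro borel_measurable_continuous_onI linear_continuous_on) (simp add: linear_linear)
  have "matrix f ** matrix g = mat 1"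
    using fg matrix_compose [OF g f] by (metis comp_apply eq_id_iff matrix_id_mat_1)
  then have det_fg: "\<bar>det (matrix f)\<bar> * \<bar>det (matrix g)\<bar> = 1"
    by (metis abs_mult abs_one det_I det_mul)
  fix l u :: "real^'n"
  assume "\<And>b. b \<in> Basis \<Longrightarrow> l \<bullet> b \<le> u \<bullet> b"
  then have box: "measure lebesgue (box l u) = (\<Prod>b\<in>Basis. (u - l) \<bullet> b)"
    by (simp add: measure_lborel_box_eq)
  have preimage: "f -` box l u = g ` box l u"
    using gf fg by (auto simp: image_iff) metis
  have "box l u \<in> lmeasurable"
    by simp
  have "g ` box l u \<in> sets borel"
    unfolding preimage [symmetric] using measurable_sets_borel [OF f_borel, of "box l u"] by simp
  then have "emeasure lborel (f -` box l u) = emeasure lebesgue (g ` box l u)"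
    unfolding preimage by simp
  also have "\<dots> = ennreal (\<bar>det (matrix g)\<bar> * measure lebesgue (box l u))"
    using lmeasurable_linear_image_finite [OF g \<open>box l u \<in> lmeasurable\<close>]
      measure_linear_image_finite [OF g \<open>box l u \<in> lmeasurable\<close>]
    by (simp add: emeasure_eq_measure2)
  finally have "emeasure lborel (f -` box l u) = ennreal (\<bar>det (matrix g)\<bar> * measure lebesgue (box l u))" .
  then have "emeasure (density (distr lborel borel f) (\<lambda>_. ennreal \<bar>det (matrix f)\<bar>)) (box l u)
      = ennreal (\<bar>det (matrix f)\<bar> * (\<bar>det (matrix g)\<bar> * measure lebesgue (box l u)))"
    by (simp add: emeasure_density nn_integral_cmult_indicator emeasure_distr ennreal_mult')
  then show "emeasure (density (distr lborel borel f) (\<lambda>_. ennreal \<bar>det (matrix f)\<bar>)) (box l u)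
      = (\<Prod>b\<in>Basis. (u - l) \<bullet> b)"
    by (simp add: det_fg box mult.assoc [symmetric])
qed simp

lemma nn_integral_linear_finite:
  fixes f :: "real^'n::finite \<Rightarrow> real^'n"
  assumes lf: "linear f" and d: "det (matrix f) \<noteq> 0" and [measurable]: "h \<in> borel_measurable borel"
  shows "(\<integral>\<^sup>+x. h x \<partial>lborel) = ennreal \<bar>det (matrix f)\<bar> * (\<integral>\<^sup>+x. h (f x) \<partial>lborel)"
proof -
  have fm[measurable]: "f \<in> borel_measurable borel"
    using lf by (intro borel_measurable_continuous_onI linear_continuous_on) (simp add: linear_linear)
  show ?thesis
    by (subst lborel_linear_finite[OF lf d]) (simp add: nn_integral_density nn_integral_distr nn_integral_cmult)
qed

lemma det_matrix_conjugate:
  fixes R D R' :: "real^'n::finite \<Rightarrow> real^'n"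
  assumes "linear R" "linear D" "linear R'" and inverse: "\<And>x. R (R' x) = x"
  shows "det (matrix (R \<circ> D \<circ> R')) = det (matrix D)"
proof -
  have "matrix R ** matrix R' = mat 1"
    using inverse matrix_compose [OF \<open>linear R'\<close> \<open>linear R\<close>]
    by (metis comp_apply eq_id_iff matrix_id_mat_1)
  then have "det (matrix R) * det (matrix R') = 1"
    by (metis det_I det_mul)
  moreover have "matrix (R \<circ> D \<circ> R') = matrix R ** matrix D ** matrix R'"
    using assms(1-3) by (simp add: linear_compose matrix_compose)
  ultimately show ?thesis
    by (simp add: det_mul)
qed

lemma det_scaleR_plus_rank_one:
  fixes e :: "real^'n::finite"
  assumes e: "norm e = 1"
  shows "det (matrix (\<lambda>v. a *\<^sub>R v + (b * (e \<bullet> v)) *\<^sub>R e)) = (a + b) * a ^ (CARD('n) - 1)"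
proof -
  fix k :: 'n
  obtain R :: "real^'n \<Rightarrow> real^'n" where R: "orthogonal_transformation R" and Rk: "R (axis k 1) = e"
    using rotation_rightward_line [of e k] e by auto
  define R' where "R' = inv R"
  have R': "orthogonal_transformation R'" "\<And>x. R (R' x) = x"
    unfolding R'_def using R by (simp_all add: orthogonal_transformation_inv orthogonal_transformation_surj surj_f_inv_f)
  define d where "d i = (if i = k then a + b else a)" for i
  define D where "D x = (\<chi> i. d i * x $ i)" for x :: "real^'n"
  have "linear D"
    unfolding D_def by (rule linearI) (auto simp: vec_eq_iff algebra_simps)
  have "(\<lambda>v. a *\<^sub>R v + (b * (e \<bullet> v)) *\<^sub>R e) = R \<circ> D \<circ> R'"
  proof
    fix v
    have "R' v $ k = R (axis k 1) \<bullet> R (R' v)"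
      using R by (simp add: orthogonal_transformation_def inner_axis')
    then have "R' v $ k = e \<bullet> v"
      using Rk R' by simp
    moreover have "D (R' v) = a *\<^sub>R R' v + (b * R' v $ k) *\<^sub>R axis k 1"
      unfolding D_def d_def by (auto simp: vec_eq_iff axis_def algebra_simps)
    ultimately show "a *\<^sub>R v + (b * (e \<bullet> v)) *\<^sub>R e = (R \<circ> D \<circ> R') v"
      using orthogonal_transformation_linear [OF R] R' Rk by (simp add: linear_add linear_scale)
  qed
  moreover have "det (matrix D) = d k * (\<Prod>i\<in>UNIV - {k}. d i)"
    by (simp add: D_def axis_def matrix_def det_diagonal prod.remove)
  moreover have "(\<Prod>i\<in>UNIV - {k}. d i) = a ^ (CARD('n) - 1)"
    by (simp add: d_def card_Diff_singleton)
  ultimately show ?thesis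
    using det_matrix_conjugate [OF orthogonal_transformation_linear [OF R] \<open>linear D\<close>
        orthogonal_transformation_linear [OF R'(1)] R'(2)]
    by (simp add: d_def)
qed

section \<open>Slabs under radially nonincreasing densities\<close>

definition slab_squeeze :: "'a::real_inner \<Rightarrow> real \<Rightarrow> real \<Rightarrow> 'a \<Rightarrow> 'a" where
  "slab_squeeze e c r v = (1/2) *\<^sub>R v + ((e \<bullet> v - c) / r - (e \<bullet> v) / 2) *\<^sub>R e"

lemma slab_squeeze_inner_le:
  fixes e v :: "'a::real_inner"
  assumes e: "norm e = 1" and r: "r > 0" and slab: "\<bar>e \<bullet> v - c\<bar> \<le> r"
  shows "slab_squeeze e c r v \<bullet> slab_squeeze e c r v \<le> max (v \<bullet> v) 4"
proof -
  define s where "s = e \<bullet> v"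
  define a where "a = (s - c) / r - s / 2"
  have ee: "e \<bullet> e = 1"
    using e by (simp add: dot_square_norm)
  have "slab_squeeze e c r v \<bullet> slab_squeeze e c r v = (1/4) * (v \<bullet> v) + a * s + a\<^sup>2"
    unfolding slab_squeeze_def s_def [symmetric] a_def [symmetric] using ee
    by (simp add: inner_add_left inner_add_right inner_commute [of v e] s_def [symmetric]
        power2_eq_square algebra_simps)
  also have "\<dots> = (v \<bullet> v - s\<^sup>2) / 4 + ((s - c) / r)\<^sup>2"
    unfolding a_def using r by (simp add: power2_eq_square field_simps)
  also have "\<dots> \<le> (v \<bullet> v) / 4 + 1"
  proof -
    have "\<bar>s - c\<bar>\<^sup>2 \<le> r\<^sup>2"
      using power_mono [OF slab [folded s_def] abs_ge_zero, of 2] .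
    then have "((s - c) / r)\<^sup>2 \<le> 1"
      using r by (simp add: power_divide)
    moreover have "0 \<le> s\<^sup>2"
      by simp
    ultimately show ?thesis
      unfolding diff_divide_distrib by linarith
  qed
  also have "\<dots> \<le> max (v \<bullet> v) 4"
    by (simp add: max_def)
  finally show ?thesis .
qed

lemma slab_squeeze_affine:
  "slab_squeeze e c r = (\<lambda>v. ((1/2) *\<^sub>R v + ((1/r - 1/2) * (e \<bullet> v)) *\<^sub>R e) + (- c / r) *\<^sub>R e)"
proof
  fix v
  have "(e \<bullet> v - c) / r - (e \<bullet> v) / 2 = (1/r - 1/2) * (e \<bullet> v) + - c / r"
    by (simp add: diff_divide_distrib algebra_simps)
  then show "slab_squeeze e c r v = ((1/2) *\<^sub>R v + ((1/r - 1/2) * (e \<bullet> v)) *\<^sub>R e) + (- c / r) *\<^sub>R e"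
    unfolding slab_squeeze_def by (metis add.assoc scaleR_add_left)
qed

lemma nn_integral_slab_squeeze:
  fixes e :: "real^'n::finite" and h :: "real^'n \<Rightarrow> ennreal"
  assumes e: "norm e = 1" and r: "r > 0" and [measurable]: "h \<in> borel_measurable borel"
  shows "(\<integral>\<^sup>+v. h (slab_squeeze e c r v) \<partial>lborel) = ennreal (r * 2 ^ (CARD('n) - 1)) * (\<integral>\<^sup>+x. h x \<partial>lborel)"
proof -
  define L where "L v = (1/2) *\<^sub>R v + ((1/r - 1/2) * (e \<bullet> v)) *\<^sub>R e" for v :: "real^'n"
  define t where "t = (- c / r) *\<^sub>R e"
  have squeeze: "slab_squeeze e c r v = L v + t" for v
    unfolding slab_squeeze_affine L_def t_def ..
  have lin: "linear L"
    unfolding L_def by (rule linearI) (auto simp: algebra_simps inner_add_right scaleR_add_left)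
  have det: "\<bar>det (matrix L)\<bar> = (1/r) * (1/2) ^ (CARD('n) - 1)"
  proof -
    have "L = (\<lambda>v. (1/2) *\<^sub>R v + ((1/r - 1/2) * (e \<bullet> v)) *\<^sub>R e)"
      unfolding L_def ..
    then show ?thesis
      using det_scaleR_plus_rank_one [OF e, of "1/2" "1/r - 1/2"] r by simp
  qed
  have ht [measurable]: "(\<lambda>x. h (x + t)) \<in> borel_measurable borel"
    by measurable
  have "(\<integral>\<^sup>+x. h (t + x) \<partial>lborel) = (\<integral>\<^sup>+x. h x \<partial>distr lborel borel ((+) t))"
    by (simp add: nn_integral_distr)
  then have "(\<integral>\<^sup>+x. h x \<partial>lborel) = (\<integral>\<^sup>+x. h (t + x) \<partial>lborel)"
    by (simp add: lborel_distr_plus)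
  also have "\<dots> = ennreal \<bar>det (matrix L)\<bar> * (\<integral>\<^sup>+v. h (slab_squeeze e c r v) \<partial>lborel)"
  proof -
    have "det (matrix L) \<noteq> 0"
      using det r by auto
    then show ?thesis
      using nn_integral_linear_finite [OF lin _ ht] by (simp add: squeeze add.commute)
  qed
  finally have "(\<integral>\<^sup>+x. h x \<partial>lborel) = ennreal \<bar>det (matrix L)\<bar> * (\<integral>\<^sup>+v. h (slab_squeeze e c r v) \<partial>lborel)" .
  moreover have "ennreal (r * 2 ^ (CARD('n) - 1)) * ennreal \<bar>det (matrix L)\<bar> = 1"
    unfolding det using r by (simp add: ennreal_mult''[symmetric] power_one_over)
  ultimately show ?thesis
    by (simp add: mult.assoc [symmetric])
qed

lemma nn_integral_slab_le:
  fixes e :: "real^'n::finite" and f0 :: "real \<Rightarrow> real"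
  assumes e: "norm e = 1" and r: "r > 0"
    and f0_antimono: "\<And>s t. 0 \<le> s \<Longrightarrow> s \<le> t \<Longrightarrow> f0 t \<le> f0 s"
    and f0_measurable: "(\<lambda>v::real^'n. ennreal (f0 (v \<bullet> v))) \<in> borel_measurable borel"
  shows "(\<integral>\<^sup>+v. indicator {v. \<bar>e \<bullet> v - c\<bar> \<le> r} v * ennreal (f0 (v \<bullet> v)) \<partial>lborel)
     \<le> ennreal (r * 2 ^ (CARD('n) - 1)) * ((\<integral>\<^sup>+(v::real^'n). ennreal (f0 (v \<bullet> v)) \<partial>lborel)
          + ennreal (f0 0) * emeasure lborel (cball (0::real^'n) 2))"
proof -
  define g where "g v = ennreal (f0 (v \<bullet> v))" for v :: "real^'n"
  define H where "H v = g v + ennreal (f0 0) * indicator (cball 0 2) v" for v :: "real^'n"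
  have [measurable]: "g \<in> borel_measurable borel"
    unfolding g_def [abs_def] by (rule f0_measurable)
  have ball [measurable]: "(\<lambda>v. ennreal (f0 0) * indicator (cball (0::real^'n) 2) v) \<in> borel_measurable borel"
    by (intro borel_measurable_times_ennreal borel_measurable_indicator) simp_all
  have [measurable]: "H \<in> borel_measurable borel"
    unfolding H_def [abs_def] by measurable
  have dominated: "indicator {v. \<bar>e \<bullet> v - c\<bar> \<le> r} v * g v \<le> H (slab_squeeze e c r v)" for v
  proof (cases "\<bar>e \<bullet> v - c\<bar> \<le> r")
    case True
    define w where "w = slab_squeeze e c r v"
    have "w \<bullet> w \<le> max (v \<bullet> v) 4"
      unfolding w_def using slab_squeeze_inner_le [OF e r True] .
    then consider "w \<bullet> w \<le> v \<bullet> v" | "w \<bullet> w \<le> 4"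
      by linarith
    then have "g v \<le> H w"
    proof cases
      case 1
      then have "g v \<le> g w"
        unfolding g_def by (simp add: ennreal_leI f0_antimono)
      then show ?thesis
        unfolding H_def by (simp add: add_increasing2)
    next
      case 2
      then have "norm w \<le> 2"
        by (simp add: norm_eq_sqrt_inner real_sqrt_le_iff [of _ 4, simplified])
      moreover have "g v \<le> ennreal (f0 0)"
        unfolding g_def by (simp add: ennreal_leI f0_antimono)
      ultimately show ?thesis
        unfolding H_def by (simp add: add_increasing)
    qed
    then show ?thesis
      using True by (simp add: w_def)
  qed simp
  have "(\<integral>\<^sup>+v. indicator {v. \<bar>e \<bullet> v - c\<bar> \<le> r} v * g v \<partial>lborel) \<le> (\<integral>\<^sup>+v. H (slab_squeeze e c r v) \<partial>lborel)"
    using dominated by (intro nn_integral_mono) simp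
  also have "\<dots> = ennreal (r * 2 ^ (CARD('n) - 1)) * (\<integral>\<^sup>+v. H v \<partial>lborel)"
    using nn_integral_slab_squeeze [OF e r] by simp
  also have "(\<integral>\<^sup>+v. H v \<partial>lborel)
      = (\<integral>\<^sup>+v. g v \<partial>lborel) + (\<integral>\<^sup>+v. ennreal (f0 0) * indicator (cball (0::real^'n) 2) v \<partial>lborel)"
    unfolding H_def by (rule nn_integral_add) simp_all
  also have "(\<integral>\<^sup>+v. ennreal (f0 0) * indicator (cball (0::real^'n) 2) v \<partial>lborel)
      = ennreal (f0 0) * emeasure lborel (cball (0::real^'n) 2)"
    by (rule nn_integral_cmult_indicator) simp
  finally show ?thesis
    unfolding g_def .
qed

section \<open>Eigenvalues of real symmetric matrices\<close>

lemma prod_comp_morphism: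
  "h 1 = 1 \<Longrightarrow> (\<And>x y. h (x * y) = h x * h y) \<Longrightarrow> prod (h \<circ> g) A = h (prod g A)"
  by (induct A rule: infinite_finite_induct) simp_all

lemma det_morphism:
  fixes h :: "'a::comm_ring_1 \<Rightarrow> 'b::comm_ring_1" and A :: "'a^'n::finite^'n"
  assumes zero: "h 0 = 0" and add: "\<And>x y. h (x + y) = h x + h y"
    and one: "h 1 = 1" and mult: "\<And>x y. h (x * y) = h x * h y"
  shows "h (det A) = det (\<chi> i j. h (A $ i $ j))"
proof -
  have "h (- x) = - h x" for x
    using add [of "- x" x] zero by (simp add: eq_neg_iff_add_eq_0)
  then have sign: "h (of_int (sign p)) = of_int (sign p)" for p :: "'n \<Rightarrow> 'n"
    by (cases p rule: sign_cases) (simp_all add: one)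
  show ?thesis
    unfolding det_def sum_comp_morphism [of h, OF zero add, symmetric]
    by (simp add: mult sign prod_comp_morphism [of h, OF one mult, symmetric] o_def)
qed

lemma map_poly_of_real_add:
  "map_poly (of_real :: real \<Rightarrow> complex) (p + q) = map_poly of_real p + map_poly of_real q"
  by (rule poly_eqI) (simp add: coeff_map_poly)

lemma map_poly_of_real_mult:
  "map_poly (of_real :: real \<Rightarrow> complex) (p * q) = map_poly of_real p * map_poly of_real q"
  by (rule poly_eqI) (simp add: coeff_map_poly coeff_mult)

lemma poly_map_poly_of_real:
  "poly (map_poly (of_real :: real \<Rightarrow> complex) p) (of_real x) = of_real (poly p x)"
  by (induction p) (auto simp: map_poly_pCons)

lemma poly_charpoly: "poly (charpoly A) x = det (mat x - A)"
proof -
  let ?M = "\<chi> i j. (if i = j then [:0, 1:] else 0) - [: A $ i $ j :]"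
  have "poly (charpoly A) x = det (\<chi> i j. poly (?M $ i $ j) x)"
    unfolding charpoly_def by (rule det_morphism) simp_all
  also have "\<dots> = det (mat x - A)"
    by (rule arg_cong [where f = det]) (simp add: vec_eq_iff mat_def)
  finally show ?thesis .
qed

lemma poly_map_poly_charpoly:
  "poly (map_poly of_real (charpoly A)) z = det (mat z - (\<chi> i j. complex_of_real (A $ i $ j)))"
proof -
  let ?M = "\<chi> i j. (if i = j then [:0, 1:] else 0) - [: A $ i $ j :]"
  have "poly (map_poly of_real (charpoly A)) z = det (\<chi> i j. poly (map_poly of_real (?M $ i $ j)) z)"
    unfolding charpoly_def
    by (rule det_morphism) (simp_all add: map_poly_of_real_add map_poly_of_real_mult)
  also have "\<dots> = det (mat z - (\<chi> i j. complex_of_real (A $ i $ j)))"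
    by (rule arg_cong [where f = det])
      (simp add: vec_eq_iff mat_def map_poly_pCons)
  finally show ?thesis .
qed

lemma card_fixpoints_less:
  fixes p :: "'n::finite \<Rightarrow> 'n"
  assumes "p \<noteq> id"
  shows "card {i. p i = i} < CARD('n)"
proof -
  have "{i. p i = i} \<subset> UNIV"
    using assms by (auto simp: fun_eq_iff)
  then show ?thesis
    by (simp add: psubset_card_mono)
qed

lemma
  fixes A :: "real^'n::finite^'n"
  shows coeff_charpoly_card: "coeff (charpoly A) CARD('n) = 1"
    and degree_charpoly: "degree (charpoly A) = CARD('n)"
proof -
  define M :: "real poly^'n^'n" where "M = (\<chi> i j. (if i = j then [:0, 1:] else 0) - [: A $ i $ j :])"
  define T where "T p = of_int (sign p) * (\<Prod>i\<in>UNIV. M $ i $ p i)" for p :: "'n \<Rightarrow> 'n"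
  define P where "P = {p. p permutes (UNIV :: 'n set)}"
  have charpoly: "charpoly A = (\<Sum>p\<in>P. T p)"
    unfolding charpoly_def det_def M_def [symmetric] P_def T_def ..
  have degree_T: "degree (T p) \<le> card {i. p i = i}" for p
  proof -
    have "degree (T p) \<le> (\<Sum>i\<in>UNIV. degree (M $ i $ p i))"
      unfolding T_def using degree_prod_sum_le [of UNIV "\<lambda>i. M $ i $ p i"]
      by (simp add: o_def of_int_poly)
    also have "\<dots> \<le> (\<Sum>i\<in>UNIV. if p i = i then 1 else 0)"
      by (rule sum_mono) (auto simp: M_def intro: order.trans [OF degree_diff_le])
    finally show ?thesis
      by (simp add: sum.If_cases)
  qed
  have T_id: "T id = (\<Prod>i\<in>UNIV. [:- (A $ i $ i), 1:])"
    by (simp add: T_def M_def sign_id)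
  have "degree (T id) = CARD('n)" "coeff (T id) CARD('n) = 1"
    using lead_coeff_prod [of "\<lambda>i. [:- (A $ i $ i), 1:]" UNIV]
    by (simp_all add: T_id degree_prod_eq_sum_degree)
  moreover have "coeff (T p) CARD('n) = 0" if "p \<noteq> id" for p
    using degree_T [of p] card_fixpoints_less [OF that] by (simp add: coeff_eq_0)
  moreover have "id \<in> P" and fin: "finite P"
    by (simp_all add: P_def permutes_id finite_permutations)
  ultimately show coeff: "coeff (charpoly A) CARD('n) = 1"
    unfolding charpoly coeff_sum by (simp add: sum.remove [OF fin \<open>id \<in> P\<close>])
  have "degree (charpoly A) \<le> CARD('n)"
    unfolding charpoly
  proof (rule degree_sum_le [OF fin])
    fix p
    show "degree (T p) \<le> CARD('n)"
      using degree_T [of p] card_mono [of UNIV "{i. p i = i}"] by simp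
  qed
  moreover have "CARD('n) \<le> degree (charpoly A)"
    using coeff by (intro le_degree) simp
  ultimately show "degree (charpoly A) = CARD('n)"
    by simp
qed

lemma real_rooted_poly_obtain_root:
  fixes p :: "real poly"
  assumes "degree p \<noteq> 0" and real_rooted: "\<And>z. poly (map_poly of_real p) z = 0 \<Longrightarrow> Im z = 0"
  obtains x where "poly p x = 0"
proof -
  have "\<not> constant (poly (map_poly complex_of_real p))"
    using assms(1) by (simp add: constant_degree degree_map_poly)
  then obtain z :: complex where z: "poly (map_poly of_real p) z = 0"
    using fundamental_theorem_of_algebra by blast
  then have "z = of_real (Re z)"
    using real_rooted by (simp add: complex_eq_iff)
  then have "of_real (poly p (Re z)) = (0::complex)"
    using z by (metis poly_map_poly_of_real)
  then show ?thesis
    using that by simp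
qed

lemma size_proots_real_rooted:
  fixes p :: "real poly"
  assumes "p \<noteq> 0" and "\<And>z. poly (map_poly of_real p) z = 0 \<Longrightarrow> Im z = 0"
  shows "size (proots p) = degree p"
  using assms
proof (induction "degree p" arbitrary: p)
  case 0
  then show ?case
    using size_proots_le [of p] by simp
next
  case (Suc n)
  obtain x where "poly p x = 0"
    using Suc.hyps(2) Suc.prems(2) by (metis real_rooted_poly_obtain_root nat.distinct(1))
  then obtain q where p: "p = [:-x, 1:] * q"
    by (metis dvdE poly_eq_0_iff_dvd)
  have "q \<noteq> 0"
    using Suc.prems(1) p by auto
  have "degree p = degree [:-x, 1:] + degree q"
    unfolding p by (rule degree_mult_eq) (use \<open>q \<noteq> 0\<close> in auto)
  then have "degree q = n"
    using Suc.hyps(2) by simp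
  moreover have "Im z = 0" if "poly (map_poly of_real q) z = 0" for z
    using that Suc.prems(2) [of z] unfolding p map_poly_of_real_mult by simp
  ultimately have "size (proots q) = degree q"
    using Suc.hyps(1) \<open>q \<noteq> 0\<close> by metis
  moreover have "proots p = proots [:-x, 1:] + proots q"
    unfolding p by (rule proots_mult) (use \<open>q \<noteq> 0\<close> in auto)
  moreover have "proots [:-x, 1:] = {#x#}"
    using proots_linear_factor [of "-x"] by simp
  ultimately show ?case
    using \<open>degree q = n\<close> Suc.hyps(2) by simp
qed

lemma det_eq_0_imp_kernel:
  fixes A :: "'a::field^'n::finite^'n"
  assumes "det A = 0"
  obtains w where "w \<noteq> 0" "A *v w = 0"
proof -
  have "\<not> inj ((*v) A)"
    using det_nz_iff_inj_gen [of "(*v) A"] assms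
    by (simp add: matrix_of_matrix_vector_mul [unfolded fun_eq_iff])
  then obtain x y where "x \<noteq> y" "A *v x = A *v y"
    unfolding inj_def by blast
  then show ?thesis
    using that [of "x - y"] by (simp add: matrix_vector_mult_diff_distrib)
qed

text \<open>For \<open>S w = z w\<close> with \<open>w \<noteq> 0\<close>, the Hermitian form \<open>w\<^sup>* S w = z \<parallel>w\<parallel>\<^sup>2\<close>
  is real because \<open>S\<close> is real symmetric.\<close>

lemma symmetric_charpoly_complex_root_real:
  fixes S :: "real^'n::finite^'n"
  assumes sym: "transpose S = S" and z: "poly (map_poly of_real (charpoly S)) z = 0"
  shows "Im z = 0"
proof -
  define s where "s i j = complex_of_real (S $ i $ j)" for i j
  obtain w where "w \<noteq> 0" and kernel: "(mat z - (\<chi> i j. s i j)) *v w = 0"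
    using det_eq_0_imp_kernel z unfolding poly_map_poly_charpoly s_def by blast
  have eigen: "(\<Sum>j\<in>UNIV. s i j * w $ j) = z * w $ i" for i
    using kernel by (simp add: vec_eq_iff matrix_vector_mult_def mat_def left_diff_distrib
        sum_subtractf if_distrib [of "\<lambda>x. x * _"] cong: if_cong)
  define T where "T = (\<Sum>i\<in>UNIV. \<Sum>j\<in>UNIV. cnj (w $ i) * s i j * w $ j)"
  define N where "N = (\<Sum>i\<in>UNIV. (cmod (w $ i))\<^sup>2)"
  have "T = (\<Sum>i\<in>UNIV. cnj (w $ i) * (z * w $ i))"
    unfolding T_def eigen [symmetric] by (simp add: sum_distrib_left mult.assoc)
  also have "\<dots> = z * of_real N"
    unfolding N_def of_real_sum complex_norm_square
    by (simp add: sum_distrib_left algebra_simps)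
  finally have T: "T = z * of_real N" .
  have "cnj T = (\<Sum>i\<in>UNIV. \<Sum>j\<in>UNIV. w $ i * s i j * cnj (w $ j))"
    unfolding T_def by (simp add: s_def)
  also have "\<dots> = (\<Sum>j\<in>UNIV. \<Sum>i\<in>UNIV. w $ i * s i j * cnj (w $ j))"
    by (rule sum.swap)
  also have "\<dots> = T"
  proof -
    have "s i j = s j i" for i j
      using sym unfolding s_def by (metis transpose_def vec_lambda_beta)
    then show ?thesis
      unfolding T_def by (intro sum.cong refl) (simp add: algebra_simps)
  qed
  finally have "cnj z * of_real N = z * of_real N"
    unfolding T by simp
  moreover have "N > 0"
  proof -
    obtain k where "w $ k \<noteq> 0"
      using \<open>w \<noteq> 0\<close> by (metis vec_eq_iff zero_index)
    then show ?thesis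
      unfolding N_def by (intro sum_pos2 [of UNIV k]) simp_all
  qed
  ultimately have "cnj z = z"
    by simp
  then show ?thesis
    by (metis Reals_cnj_iff complex_is_Real_iff)
qed

lemma length_eig_vals:
  fixes S :: "real^'n::finite^'n"
  assumes "transpose S = S"
  shows "length (eig_vals S) = CARD('n)"
proof -
  have "charpoly S \<noteq> 0"
    using coeff_charpoly_card [of S] by auto
  then have "size (proots (charpoly S)) = CARD('n)"
    using size_proots_real_rooted symmetric_charpoly_complex_root_real [OF assms] degree_charpoly
    by metis
  then show ?thesis
    unfolding eig_vals_def by (metis length_rev mset_sorted_list_of_multiset size_mset)
qed

lemma symmetric_eig_val_eigenvector:
  fixes S :: "real^'n::finite^'n"
  assumes sym: "transpose S = S" and j: "j \<in> {1..CARD('n)}"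
  obtains e where "norm e = 1" "S *v e = eig_val S j *\<^sub>R e"
proof -
  define l where "l = eig_val S j"
  have "charpoly S \<noteq> 0"
    using coeff_charpoly_card [of S] by auto
  moreover have "l \<in> set (eig_vals S)"
    unfolding l_def eig_val_def using j length_eig_vals [OF sym] by (intro nth_mem) auto
  ultimately have "det (mat l - S) = 0"
    unfolding eig_vals_def poly_charpoly [symmetric] by simp
  then obtain v where "v \<noteq> 0" and "(mat l - S) *v v = 0"
    by (rule det_eq_0_imp_kernel)
  then have "S *v v = l *\<^sub>R v"
    by (simp add: vec_eq_iff matrix_vector_mult_def mat_def left_diff_distrib sum_subtractf
        if_distrib [of "\<lambda>x. x * _"] cong: if_cong)
  then show ?thesis
    using that [of "(1 / norm v) *\<^sub>R v"] \<open>v \<noteq> 0\<close> by (simp add: matrix_vector_mult_scaleR l_def)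
qed

section \<open>The coverage probability\<close>

lemma pos_def_sym_invertible:
  fixes S :: "real^'q::finite^'q"
  assumes "pos_def_sym S"
  shows "invertible S"
proof -
  have "inj ((*v) S)"
  proof (rule injI)
    fix x y
    assume "S *v x = S *v y"
    then have "(x - y) \<bullet> (S *v (x - y)) = 0"
      by (simp add: matrix_vector_mult_diff_distrib)
    then have "x - y = 0"
      using assms unfolding pos_def_sym_def by (metis less_irrefl)
    then show "x = y"
      by simp
  qed
  then show ?thesis
    using matrix_left_invertible_injective invertible_left_inverse by blast
qed

text \<open>With \<open>w = S\<^sup>-\<^sup>1 z\<close>: \<open>e \<bullet> z = l (e \<bullet> w)\<close>, and positivity of the form at \<open>w - (e \<bullet> w) e\<close>
  gives \<open>l (e \<bullet> w)\<^sup>2 \<le> w \<bullet> S w = z \<bullet> S\<^sup>-\<^sup>1 z \<le> \<kappa>\<close>.\<close>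

lemma abs_inner_eigenvector_le:
  fixes S :: "real^'q::finite^'q"
  assumes S: "pos_def_sym S" and ev: "S *v e = l *\<^sub>R e" and e: "norm e = 1"
    and z: "z \<bullet> (matrix_inv S *v z) \<le> \<kappa>"
  shows "\<bar>e \<bullet> z\<bar> \<le> sqrt (\<kappa> * l)"
proof -
  have nonneg: "0 \<le> v \<bullet> (S *v v)" for v
    using S unfolding pos_def_sym_def by (cases "v = 0") (auto intro: less_imp_le)
  have self_adjoint: "x \<bullet> (S *v y) = (S *v x) \<bullet> y" for x y
  proof -
    have "x \<bullet> (S *v y) = (transpose S *v x) \<bullet> y"
      by (simp add: dot_lmul_matrix)
    then show ?thesis
      using S unfolding pos_def_sym_def by simp
  qed
  have ee: "e \<bullet> e = 1"
    using e by (simp add: dot_square_norm)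
  have "S ** matrix_inv S = mat 1"
    using pos_def_sym_invertible [OF S] unfolding invertible_def matrix_inv_def
    by (rule someI2_ex) simp
  define w where "w = matrix_inv S *v z"
  define t where "t = e \<bullet> w"
  have z_eq: "z = S *v w"
    unfolding w_def matrix_vector_mul_assoc \<open>S ** matrix_inv S = mat 1\<close> by simp
  have ez: "e \<bullet> z = l * t"
    unfolding z_eq self_adjoint ev t_def by simp
  have "l \<ge> 0"
    using nonneg [of e] ev ee by simp
  have "z \<bullet> w \<le> \<kappa>"
    using z unfolding w_def .
  then have "w \<bullet> (S *v w) \<le> \<kappa>"
    unfolding z_eq by (simp add: inner_commute)
  have "0 \<le> (w - t *\<^sub>R e) \<bullet> (S *v (w - t *\<^sub>R e))"
    by (rule nonneg)
  also have "\<dots> = w \<bullet> (S *v w) - l * t\<^sup>2"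
    using self_adjoint [of e w] ev ee
    by (simp add: matrix_vector_mult_diff_distrib matrix_vector_mult_scaleR inner_diff_left
        inner_diff_right inner_commute [of w e] t_def power2_eq_square algebra_simps)
  also have "\<dots> \<le> \<kappa> - l * t\<^sup>2"
    using \<open>w \<bullet> (S *v w) \<le> \<kappa>\<close> by simp
  finally have "l * (l * t\<^sup>2) \<le> l * \<kappa>"
    using \<open>l \<ge> 0\<close> by (simp add: mult_left_mono)
  then have "\<bar>e \<bullet> z\<bar>\<^sup>2 \<le> \<kappa> * l"
    unfolding ez by (simp add: power2_eq_square algebra_simps)
  then show ?thesis
    by (rule real_le_rsqrt)
qed

lemma pos_def_sym_eigenvalue_pos:
  assumes "pos_def_sym S" and "S *v e = l *\<^sub>R e" and "norm e = 1"
  shows "l > 0"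
proof -
  have "e \<bullet> (S *v e) > 0"
    using assms unfolding pos_def_sym_def by (metis norm_zero zero_neq_one)
  moreover have "e \<bullet> e = 1"
    using assms(3) by (simp add: dot_square_norm)
  ultimately show ?thesis
    using assms(2) by simp
qed

lemma emeasure_distributed_radial_slab_le:
  fixes Y :: "'w \<Rightarrow> real^'q::finite" and f0 :: "real \<Rightarrow> real"
  assumes "prob_space M"
    and f0_antimono: "\<And>s t. 0 \<le> s \<Longrightarrow> s \<le> t \<Longrightarrow> f0 t \<le> f0 s" and "0 \<le> f0 0"
    and Y: "distributed M lborel Y (\<lambda>v. ennreal (f0 (v \<bullet> v)))"
    and e: "norm e = 1" and r: "r > 0"
  shows "emeasure (distr M borel Y) {y. \<bar>e \<bullet> y - c\<bar> \<le> r}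
    \<le> ennreal (2 ^ (CARD('q) - 1) * (1 + f0 0 * measure lborel (cball (0::real^'q) 2)) * r)"
proof -
  interpret prob_space M
    by fact
  have [measurable]: "Y \<in> borel_measurable M"
    using Y unfolding distributed_def by (simp add: measurable_lborel2)
  have density [measurable]: "(\<lambda>v::real^'q. ennreal (f0 (v \<bullet> v))) \<in> borel_measurable borel"
    using Y unfolding distributed_def by simp
  have "distr M borel Y = density lborel (\<lambda>v. ennreal (f0 (v \<bullet> v)))"
    using Y unfolding distributed_def by (metis distr_cong sets_lborel)
  then have emeasure_Y: "emeasure (distr M borel Y) A = (\<integral>\<^sup>+v. indicator A v * ennreal (f0 (v \<bullet> v)) \<partial>lborel)"
    if "A \<in> sets borel" for A
    using that by (simp add: emeasure_density mult.commute)
  have "prob_space (distr M borel Y)"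
    by (rule prob_space_distr) simp
  then have "emeasure (distr M borel Y) UNIV = 1"
    using prob_space.emeasure_space_1 by fastforce
  then have "(\<integral>\<^sup>+(v::real^'q). ennreal (f0 (v \<bullet> v)) \<partial>lborel) = 1"
    using emeasure_Y [of UNIV] by simp
  moreover have "emeasure lborel (cball (0::real^'q) 2) = ennreal (measure lborel (cball (0::real^'q) 2))"
    by (rule emeasure_eq_ennreal_measure) (use emeasure_lborel_cball_finite [of "0::real^'q" 2] in simp)
  ultimately have "emeasure (distr M borel Y) {y. \<bar>e \<bullet> y - c\<bar> \<le> r}
      \<le> ennreal (r * 2 ^ (CARD('q) - 1)) * (1 + ennreal (f0 0) * ennreal (measure lborel (cball (0::real^'q) 2)))"
    using emeasure_Y nn_integral_slab_le [OF e r f0_antimono density, of c] by simp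
  also have "\<dots> = ennreal (2 ^ (CARD('q) - 1) * (1 + f0 0 * measure lborel (cball (0::real^'q) 2)) * r)"
  proof -
    define m where "m = measure lborel (cball (0::real^'q) 2)"
    define k where "k = (2::real) ^ (CARD('q) - 1)"
    have "0 \<le> m" "0 < k"
      by (simp_all add: m_def k_def)
    then have "ennreal (r * k) * (1 + ennreal (f0 0) * ennreal m) = ennreal (r * k) * ennreal (1 + f0 0 * m)"
      using \<open>0 \<le> f0 0\<close> by (simp add: ennreal_mult ennreal_plus)
    also have "\<dots> = ennreal (k * (1 + f0 0 * m) * r)"
      using r \<open>0 < k\<close> by (simp add: ennreal_mult' [symmetric] mult_ac)
    finally show ?thesis
      unfolding m_def k_def .
  qed
  finally show ?thesis .
qed

lemma prob_pair_le_sections: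
  fixes Y :: "'w \<Rightarrow> 'a::topological_space" and X :: "'w \<Rightarrow> 'b::topological_space"
  assumes "prob_space M"
    and [measurable]: "Y \<in> borel_measurable M" "X \<in> borel_measurable M"
    and indep: "distr M (borel \<Otimes>\<^sub>M borel) (\<lambda>\<omega>. (Y \<omega>, X \<omega>)) = distr M borel Y \<Otimes>\<^sub>M distr M borel X"
    and T: "T \<in> sets (borel \<Otimes>\<^sub>M borel)"
    and sections: "\<And>x. emeasure (distr M borel Y) {y. (y, x) \<in> T} \<le> ennreal b" and "0 \<le> b"
  shows "measure M {\<omega> \<in> space M. (Y \<omega>, X \<omega>) \<in> T} \<le> b"
proof -
  interpret prob_space M
    by fact
  interpret PY: prob_space "distr M borel Y"
    by (rule prob_space_distr) simp
  interpret PX: prob_space "distr M borel X"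
    by (rule prob_space_distr) simp
  interpret pair_sigma_finite "distr M borel Y" "distr M borel X" ..
  have "measure M {\<omega> \<in> space M. (Y \<omega>, X \<omega>) \<in> T} = measure (distr M borel Y \<Otimes>\<^sub>M distr M borel X) T"
    unfolding indep [symmetric] using T by (subst measure_distr) (auto intro: arg_cong [where f = "measure M"])
  also have "\<dots> \<le> b"
  proof -
    have "emeasure (distr M borel Y \<Otimes>\<^sub>M distr M borel X) T
        = (\<integral>\<^sup>+x. emeasure (distr M borel Y) ((\<lambda>y. (y, x)) -` T) \<partial>distr M borel X)"
      using T by (intro emeasure_pair_measure_alt2) simp
    also have "\<dots> \<le> (\<integral>\<^sup>+x. ennreal b \<partial>distr M borel X)"
      using sections by (intro nn_integral_mono) (simp add: vimage_def)
    also have "\<dots> = ennreal b"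
      using PX.emeasure_space_1 by simp
    finally show ?thesis
      using \<open>0 \<le> b\<close> unfolding measure_def by (intro enn2real_leI) simp_all
  qed
  finally show ?thesis .
qed

lemma prob_indep_slab_le:
  fixes Y :: "'w \<Rightarrow> real^'q::finite" and X :: "'w \<Rightarrow> 'b::topological_space" and f0 :: "real \<Rightarrow> real"
  assumes M: "prob_space M"
    and f0_antimono: "\<And>s t. 0 \<le> s \<Longrightarrow> s \<le> t \<Longrightarrow> f0 t \<le> f0 s" and f0_nonneg: "0 \<le> f0 0"
    and Y: "distributed M lborel Y (\<lambda>v. ennreal (f0 (v \<bullet> v)))"
    and X [measurable]: "X \<in> borel_measurable M"
    and indep: "distr M (borel \<Otimes>\<^sub>M borel) (\<lambda>\<omega>. (Y \<omega>, X \<omega>)) = distr M borel Y \<Otimes>\<^sub>M distr M borel X"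
    and [measurable]: "h \<in> borel_measurable borel" and e: "norm e = 1" and r: "r > 0"
  shows "measure M {\<omega> \<in> space M. \<bar>e \<bullet> Y \<omega> - h (X \<omega>)\<bar> \<le> r}
    \<le> 2 ^ (CARD('q) - 1) * (1 + f0 0 * measure lborel (cball (0::real^'q) 2)) * r"
proof -
  define T where "T = {p :: (real^'q) \<times> 'b. \<bar>e \<bullet> fst p - h (snd p)\<bar> \<le> r}"
  have "{p \<in> space (borel \<Otimes>\<^sub>M borel). \<bar>e \<bullet> fst p - h (snd p)\<bar> \<le> r} \<in> sets (borel \<Otimes>\<^sub>M (borel :: 'b measure))"
    by measurable
  then have "T \<in> sets (borel \<Otimes>\<^sub>M borel)"
    unfolding T_def by (simp add: space_pair_measure)
  moreover have "Y \<in> borel_measurable M"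
    using Y unfolding distributed_def by (simp add: measurable_lborel2)
  ultimately have "measure M {\<omega> \<in> space M. (Y \<omega>, X \<omega>) \<in> T}
      \<le> 2 ^ (CARD('q) - 1) * (1 + f0 0 * measure lborel (cball (0::real^'q) 2)) * r"
    using emeasure_distributed_radial_slab_le [OF M f0_antimono f0_nonneg Y e r] f0_nonneg r
    by (intro prob_pair_le_sections [OF M _ X indep]) (simp_all add: T_def)
  then show ?thesis
    by (simp add: T_def)
qed

lemma alpha_le_prob_slab:
  fixes Y :: "'w \<Rightarrow> real^'q::finite" and X :: "'w \<Rightarrow> real^'p::finite"
  assumes "prob_space M" and [measurable]: "Y \<in> borel_measurable M" "X \<in> borel_measurable M"
    and S: "pos_def_sym S" and ev: "S *v e = l *\<^sub>R e" and e: "norm e = 1"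
  shows "alpha M Y X B S \<kappa> \<le> measure M {\<omega> \<in> space M. \<bar>e \<bullet> Y \<omega> - e \<bullet> (transpose B *v X \<omega>)\<bar> \<le> sqrt (\<kappa> * l)}"
proof -
  interpret prob_space M
    by fact
  have [measurable]: "(\<lambda>x::real^'p. transpose B *v x) \<in> borel_measurable borel"
    "(\<lambda>z::real^'q. z \<bullet> (matrix_inv S *v z)) \<in> borel_measurable borel"
    by (intro borel_measurable_continuous_onI continuous_intros)+
  define A where "A = {\<omega> \<in> space M.
    (Y \<omega> - transpose B *v X \<omega>) \<bullet> (matrix_inv S *v (Y \<omega> - transpose B *v X \<omega>)) \<le> \<kappa>}"
  have "A \<in> sets M"
    unfolding A_def by measurable
  have "alpha M Y X B S \<kappa> = measure M A"
    unfolding alpha_def A_def [symmetric] using \<open>A \<in> sets M\<close> by (simp add: Int_absorb2)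
  also have "\<dots> \<le> measure M {\<omega> \<in> space M. \<bar>e \<bullet> Y \<omega> - e \<bullet> (transpose B *v X \<omega>)\<bar> \<le> sqrt (\<kappa> * l)}"
  proof (rule finite_measure_mono)
    have "\<bar>e \<bullet> (Y \<omega> - transpose B *v X \<omega>)\<bar> \<le> sqrt (\<kappa> * l)" if "\<omega> \<in> A" for \<omega>
      using that abs_inner_eigenvector_le [OF S ev e] unfolding A_def by blast
    then show "A \<subseteq> {\<omega> \<in> space M. \<bar>e \<bullet> Y \<omega> - e \<bullet> (transpose B *v X \<omega>)\<bar> \<le> sqrt (\<kappa> * l)}"
      unfolding inner_diff_right [symmetric] using A_def by blast
    show "{\<omega> \<in> space M. \<bar>e \<bullet> Y \<omega> - e \<bullet> (transpose B *v X \<omega>)\<bar> \<le> sqrt (\<kappa> * l)} \<in> sets M"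
      by measurable
  qed
  finally show ?thesis .
qed

theorem lemma7:
  fixes M :: "'w measure"
    and Y :: "'w \<Rightarrow> real^'q"
    and X :: "'w \<Rightarrow> real^'p"
    and f0 :: "real \<Rightarrow> real"
    and \<kappa> :: real
  assumes "prob_space M"
    and "\<And>t. t \<ge> 0 \<Longrightarrow> f0 t \<ge> 0"
    and "\<And>s t. 0 \<le> s \<Longrightarrow> s \<le> t \<Longrightarrow> f0 t \<le> f0 s"
    and "distributed M lborel Y (\<lambda>v. ennreal (f0 (v \<bullet> v)))"
    and "X \<in> borel_measurable M"
    and "distr M (borel \<Otimes>\<^sub>M borel) (\<lambda>\<omega>. (Y \<omega>, X \<omega>)) =
           distr M borel Y \<Otimes>\<^sub>M distr M borel X"
    and "\<kappa> > 0"
  shows "\<exists>\<kappa>1. \<forall>B S. pos_def_sym S \<longrightarrow>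
           (\<forall>j\<in>{1..CARD('q)}. alpha M Y X B S \<kappa> \<le> \<kappa>1 * sqrt (eig_val S j))"
proof -
  note M = assms(1) and f0_nonneg = assms(2) and f0_antimono = assms(3) and Y = assms(4)
    and X = assms(5) and indep = assms(6)
  have "Y \<in> borel_measurable M"
    using Y unfolding distributed_def by (simp add: measurable_lborel2)
  define C where "C = 2 ^ (CARD('q) - 1) * (1 + f0 0 * measure lborel (cball (0::real^'q) 2))"
  show ?thesis
  proof (intro exI allI impI ballI)
    fix B :: "real^'q^'p" and S :: "real^'q^'q" and j
    assume S: "pos_def_sym S" and j: "j \<in> {1..CARD('q)}"
    obtain e where e: "norm e = 1" and ev: "S *v e = eig_val S j *\<^sub>R e"
      using S j symmetric_eig_val_eigenvector unfolding pos_def_sym_def by metis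
    define r where "r = sqrt (\<kappa> * eig_val S j)"
    have "r > 0"
      using pos_def_sym_eigenvalue_pos [OF S ev e] \<open>\<kappa> > 0\<close> by (simp add: r_def)
    have "alpha M Y X B S \<kappa> \<le> measure M {\<omega> \<in> space M. \<bar>e \<bullet> Y \<omega> - e \<bullet> (transpose B *v X \<omega>)\<bar> \<le> r}"
      unfolding r_def by (rule alpha_le_prob_slab [OF M \<open>Y \<in> borel_measurable M\<close> X S ev e])
    also have "\<dots> \<le> C * r"
    proof -
      have "(\<lambda>x. e \<bullet> (transpose B *v x)) \<in> borel_measurable borel"
        by (intro borel_measurable_continuous_onI continuous_intros)
      then show ?thesis
        using prob_indep_slab_le [OF M f0_antimono f0_nonneg [OF order_refl] Y X indep _ e \<open>r > 0\<close>]
        by (simp add: C_def)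
    qed
    also have "\<dots> = C * sqrt \<kappa> * sqrt (eig_val S j)"
      by (simp add: r_def real_sqrt_mult)
    finally show "alpha M Y X B S \<kappa> \<le> C * sqrt \<kappa> * sqrt (eig_val S j)" .
  qed
qed

end
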